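(* Let $L$ be a finite graded lattice of rank $n$ with an $S_n$ EL-labeling, let $\mathfrak m$ be a maximal chain of $L$, and let $\mathfrak m'\in\mathcal{M}_{\mathfrak m}$. Then $Q_{\mathfrak m'}=L_{\mathfrak m'}$.
   Context: An $S_n$ EL-labeling: edge-labeling of covering pairs such that each interval has exactly one maximal chain with weakly increasing labels (bottom to top), lexicographically smallest among its maximal chains, and labels along each maximal chain form a permutation of $[n]$. $\mathfrak m_0$ denotes the unique maximal chain of $L$ whose labels are $1,2,\dots,n$ (the identity permutation). For a maximal chain $\mathfrak c$, $L_{\mathfrak c}$ is the sublattice of $L$ generated by $\mathfrak m_0$ and $\mathfrak c$. $U_i(\mathfrak c)$ ($i\in[n-1]$) is the unique maximal chain agreeing with $\mathfrak c$ except possibly at rank $i$ whose labels have no descent at position $i$. $\mathcal{M}_{\mathfrak c}$ is the set of all chains $U_{i_1}\cdots U_{i_r}(\mathfrak c)$ over all finite sequences (including empty), and $Q_{\mathfrak c}$ is the subposet of $L$ consisting of all elements lying on some chain in $\mathcal{M}_{\mathfrak c}$. *)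

theory Defs
  imports Main "HOL-Library.Multiset"
begin

definition covers :: "'a::order \<Rightarrow> 'a \<Rightarrow> bool" where
  "covers x y \<longleftrightarrow> x < y \<and> \<not> (\<exists>z. x < z \<and> z < y)"

definition sat_chain :: "'a::order \<Rightarrow> 'a \<Rightarrow> 'a list \<Rightarrow> bool" where
  "sat_chain x y cs \<longleftrightarrow> cs \<noteq> [] \<and> hd cs = x \<and> last cs = y \<and>
     (\<forall>j. Suc j < length cs \<longrightarrow> covers (cs ! j) (cs ! Suc j))"

definition maxchain :: "'a::bounded_lattice list \<Rightarrow> bool" where
  "maxchain cs \<longleftrightarrow> sat_chain bot top cs"

definition graded_rank :: "('a::bounded_lattice) itself \<Rightarrow> nat \<Rightarrow> bool" where
  "graded_rank _ n \<longleftrightarrow> (\<forall>cs::'a list. maxchain cs \<longrightarrow> length cs = Suc n)"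

definition labels :: "('a \<Rightarrow> 'a \<Rightarrow> nat) \<Rightarrow> 'a list \<Rightarrow> nat list" where
  "labels lam cs = map (\<lambda>j. lam (cs ! j) (cs ! Suc j)) [0..<length cs - 1]"

definition EL_labeling :: "('a::order \<Rightarrow> 'a \<Rightarrow> nat) \<Rightarrow> bool" where
  "EL_labeling lam \<longleftrightarrow> (\<forall>x y. x \<le> y \<longrightarrow>
     (\<exists>!cs. sat_chain x y cs \<and> sorted (labels lam cs)) \<and>
     (\<forall>cs cs'. sat_chain x y cs \<and> sorted (labels lam cs) \<and> sat_chain x y cs' \<longrightarrow>
        lexordp_eq (labels lam cs) (labels lam cs')))"

definition Sn_EL_labeling :: "nat \<Rightarrow> ('a::bounded_lattice \<Rightarrow> 'a \<Rightarrow> nat) \<Rightarrow> bool" where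
  "Sn_EL_labeling n lam \<longleftrightarrow> EL_labeling lam \<and>
     (\<forall>cs. maxchain cs \<longrightarrow> mset (labels lam cs) = mset [1..<Suc n])"

definition m0 :: "nat \<Rightarrow> ('a::bounded_lattice \<Rightarrow> 'a \<Rightarrow> nat) \<Rightarrow> 'a list" where
  "m0 n lam = (THE cs. maxchain cs \<and> labels lam cs = [1..<Suc n])"

text \<open>U_i(c): the maximal chain agreeing with c except possibly at rank i, with no
  descent at position i (i.e. label_i \<le> label_{i+1}; label_k = labels ! (k-1)).\<close>
definition Uop :: "('a::bounded_lattice \<Rightarrow> 'a \<Rightarrow> nat) \<Rightarrow> nat \<Rightarrow> 'a list \<Rightarrow> 'a list" where
  "Uop lam i c = (THE c'. maxchain c' \<and> length c' = length c \<and>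
      (\<forall>j<length c. j \<noteq> i \<longrightarrow> c' ! j = c ! j) \<and>
      labels lam c' ! (i - 1) \<le> labels lam c' ! i)"

inductive_set Mset :: "('a::bounded_lattice \<Rightarrow> 'a \<Rightarrow> nat) \<Rightarrow> 'a list \<Rightarrow> 'a list set"
  for lam :: "'a \<Rightarrow> 'a \<Rightarrow> nat" and c :: "'a list" where
  base: "c \<in> Mset lam c"
| step: "d \<in> Mset lam c \<Longrightarrow> 1 \<le> i \<Longrightarrow> i < length d - 1 \<Longrightarrow> Uop lam i d \<in> Mset lam c"

definition Qset :: "('a::bounded_lattice \<Rightarrow> 'a \<Rightarrow> nat) \<Rightarrow> 'a list \<Rightarrow> 'a set" where
  "Qset lam c = (\<Union>d\<in>Mset lam c. set d)"

inductive_set gen_sublattice :: "'a::lattice set \<Rightarrow> 'a set" for S :: "'a set" where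
  gen: "x \<in> S \<Longrightarrow> x \<in> gen_sublattice S"
| meet: "x \<in> gen_sublattice S \<Longrightarrow> y \<in> gen_sublattice S \<Longrightarrow> inf x y \<in> gen_sublattice S"
| join: "x \<in> gen_sublattice S \<Longrightarrow> y \<in> gen_sublattice S \<Longrightarrow> sup x y \<in> gen_sublattice S"

definition Lsub :: "nat \<Rightarrow> ('a::bounded_lattice \<Rightarrow> 'a \<Rightarrow> nat) \<Rightarrow> 'a list \<Rightarrow> 'a set" where
  "Lsub n lam c = gen_sublattice (set (m0 n lam) \<union> set c)"

end

theory Submission
  imports Defs
begin

text \<open>Write \<open>S(y)\<close> for the set of labels on a chain from \<open>\<bottom>\<close> to \<open>y\<close>. Since the labels
  of every maximal chain form a permutation of \<open>{1..n}\<close>, it does not depend on the chain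
  and grows by one label along each cover. For the chain \<open>x\<^sub>0 < \<dots> < x\<^sub>n\<close> with labels
  \<open>1, \<dots>, n\<close>, uniqueness of increasing chains gives \<open>x\<^sub>k \<le> y\<close> iff \<open>{1..k} \<subseteq> S(y)\<close>,
  whence \<open>S(y \<squnion> x\<^sub>k) = S(y) \<union> {1..k}\<close> and \<open>S(y \<sqinter> x\<^sub>k) = S(y) \<inter> {1..k}\<close>.

  Fix a maximal chain \<open>c\<close> and order \<open>{1..n}\<close> by \<open>a \<lhd> b\<close> iff \<open>a < b\<close> and \<open>a\<close> comes before
  \<open>b\<close> among the labels of \<open>c\<close>. For an order ideal \<open>I\<close> let \<open>\<phi>(I)\<close> be the join over
  \<open>b \<in> I\<close> of \<open>c\<^sub>e \<sqinter> x\<^sub>b\<close>, where \<open>c\<^sub>e\<close> is the first element of \<open>c\<close> whose label set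
  contains \<open>b\<close>. Then \<open>S(\<phi>(I)) = I\<close>, so \<open>\<phi>\<close> preserves joins and meets; as the elements of
  \<open>c\<close> and of \<open>m\<^sub>0\<close> are values of \<open>\<phi>\<close>, the sublattice \<open>L\<^sub>c\<close> is the image of \<open>\<phi>\<close>.

  At a descent \<open>b > a\<close>, \<open>U\<^sub>i\<close> replaces the element with label set \<open>J \<union> {b}\<close> by the
  one with label set \<open>J \<union> {a}\<close>, which is again \<open>\<phi>\<close> of an ideal; hence \<open>Q\<^sub>c \<subseteq> L\<^sub>c\<close>.
  Conversely, unless the element of rank \<open>|I|\<close> of a chain in \<open>M\<^sub>c\<close> has label set \<open>I\<close>,
  some label outside \<open>I\<close> directly precedes one in \<open>I\<close>, and swapping them by \<open>U\<^sub>i\<close> strictly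
  lowers the number of labels outside \<open>I\<close> counted along the chain; so every \<open>\<phi>(I)\<close> lies
  in \<open>Q\<^sub>c\<close>.
  Every chain of \<open>M\<^sub>m\<close> is maximal, so this applies to \<open>c = m'\<close>.\<close>

section \<open>Saturated chains\<close>

lemma labels_Nil [simp]: "labels lam [] = []"
  and labels_singleton [simp]: "labels lam [a] = []"
  by (simp_all add: labels_def)

lemma labels_Cons_Cons [simp]: "labels lam (a # b # cs) = lam a b # labels lam (b # cs)"
  unfolding labels_def by (simp add: upt_conv_Cons map_Suc_upt[symmetric] del: upt_Suc)

lemma length_labels [simp]: "length (labels lam cs) = length cs - 1"
  by (simp add: labels_def)

lemma covers_imp_le: "covers x y \<Longrightarrow> x \<le> y"
  unfolding covers_def by (blast intro: less_imp_le)

lemma sat_chain_Nil [simp]: "\<not> sat_chain x y []"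
  and sat_chain_singleton [simp]: "sat_chain x y [a] \<longleftrightarrow> a = x \<and> a = y"
  by (auto simp: sat_chain_def)

lemma sat_chain_Cons_Cons:
  "sat_chain x y (a # b # cs) \<longleftrightarrow> a = x \<and> covers a b \<and> sat_chain b y (b # cs)"
proof -
  have "(\<forall>j. Suc j < length (a # b # cs) \<longrightarrow> covers ((a # b # cs) ! j) ((a # b # cs) ! Suc j))
    \<longleftrightarrow> covers a b \<and> (\<forall>j. Suc j < length (b # cs) \<longrightarrow> covers ((b # cs) ! j) ((b # cs) ! Suc j))"
    by (metis (no_types, lifting) Suc_less_eq length_Cons nat.exhaust nth_Cons_0 nth_Cons_Suc zero_less_Suc)
  then show ?thesis by (auto simp: sat_chain_def)
qed

lemma sat_chain_nth_0: "sat_chain x y cs \<Longrightarrow> cs ! 0 = x"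
  by (cases cs) (auto simp: sat_chain_def)

lemma sat_chain_nth_last: "sat_chain x y cs \<Longrightarrow> cs ! (length cs - 1) = y"
  by (auto simp: sat_chain_def last_conv_nth)

lemma sat_chain_append:
  assumes "sat_chain x y cs" and "sat_chain y z ds"
  shows "sat_chain x z (cs @ tl ds) \<and> labels lam (cs @ tl ds) = labels lam cs @ labels lam ds"
  using assms
proof (induction cs arbitrary: x rule: induct_list012)
  case (2 a)
  then show ?case by (cases ds) (auto simp: sat_chain_def)
next
  case (3 a b cs)
  then show ?case using "3.IH"(2)[of b] by (auto simp: sat_chain_Cons_Cons)
qed simp

lemma sat_chain_drop:
  assumes "sat_chain x y cs" and "j < length cs"
  shows "sat_chain (cs ! j) y (drop j cs) \<and> labels lam (drop j cs) = drop j (labels lam cs)"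
  using assms
proof (induction j arbitrary: x cs)
  case 0
  then show ?case by (simp add: sat_chain_nth_0)
next
  case (Suc j)
  then obtain a b bs where "cs = a # b # bs"
    by (metis Suc_less_eq length_Cons less_nat_zero_code list.exhaust list.size(3))
  with Suc show ?case using Suc.IH[of b "b # bs"] by (simp add: sat_chain_Cons_Cons)
qed

lemma sat_chain_nth_mono:
  assumes "sat_chain x y cs" and "j \<le> k" and "k < length cs"
  shows "cs ! j \<le> cs ! k"
  using assms(2,3)
proof (induction k)
  case (Suc k)
  then show ?case
    using assms(1) unfolding sat_chain_def
    by (metis Suc_lessD covers_imp_le le_SucE order.refl order.trans)
qed simp

lemma sat_chain_bounds:
  assumes "sat_chain x y cs" and "z \<in> set cs"
  shows "x \<le> z \<and> z \<le> y"
proof -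
  obtain j where j: "j < length cs" "z = cs ! j"
    using assms(2) by (auto simp: in_set_conv_nth)
  have "cs ! 0 \<le> cs ! j" "cs ! j \<le> cs ! (length cs - 1)"
    using sat_chain_nth_mono[OF assms(1)] j(1) by auto
  then show ?thesis
    using j(2) sat_chain_nth_0[OF assms(1)] sat_chain_nth_last[OF assms(1)] by simp
qed

lemma foldr_sup_le_iff: "foldr sup xs bot \<le> (z::'a::bounded_lattice) \<longleftrightarrow> (\<forall>x\<in>set xs. x \<le> z)"
  by (induction xs) auto

lemma foldr_sup_closed:
  "bot \<in> S \<Longrightarrow> (\<And>x y. x \<in> S \<Longrightarrow> y \<in> S \<Longrightarrow> sup x y \<in> S) \<Longrightarrow> set xs \<subseteq> S \<Longrightarrow> foldr sup xs bot \<in> S"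
  by (induction xs) auto

lemma exists_crossing_step:
  fixes p q :: nat
  assumes "\<not> P p" and "P q" and "p < q"
  shows "\<exists>i. p < i \<and> i \<le> q \<and> \<not> P (i - 1) \<and> P i"
  using assms
proof (induction q)
  case (Suc q)
  show ?case
  proof (cases "P q \<and> p < q")
    case True
    with Suc.IH Suc.prems(1) show ?thesis by (meson le_SucI)
  next
    case False
    then have "\<not> P (Suc q - 1)"
      using Suc.prems by (cases "p = q") auto
    with Suc.prems show ?thesis by (intro exI[of _ "Suc q"]) auto
  qed
qed simp

section \<open>Label sets in a lattice with an \<open>S\<^sub>n\<close> EL-labeling\<close>

locale Sn_EL_lattice =
  fixes lam :: "'a::bounded_lattice \<Rightarrow> 'a \<Rightarrow> nat" and n :: nat
  assumes graded: "graded_rank TYPE('a) n"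
    and Sn_EL: "Sn_EL_labeling n lam"
begin

lemma ex1_sorted_sat_chain: "x \<le> y \<Longrightarrow> \<exists>!cs. sat_chain x y cs \<and> sorted (labels lam cs)"
  using Sn_EL by (simp add: Sn_EL_labeling_def EL_labeling_def)

lemma ex_sorted_sat_chain: "x \<le> y \<Longrightarrow> \<exists>cs. sat_chain x y cs \<and> sorted (labels lam cs)"
  using ex1_sorted_sat_chain by blast

lemma sorted_sat_chain_unique:
  assumes "sat_chain x y cs" "sorted (labels lam cs)" "sat_chain x y ds" "sorted (labels lam ds)"
  shows "cs = ds"
proof -
  have "x \<le> y"
    using sat_chain_bounds[OF assms(1)] assms(1) by (metis last_in_set sat_chain_def)
  with assms show ?thesis
    using ex1_sorted_sat_chain by blast
qed

lemma maxchain_length: "maxchain (cs::'a list) \<Longrightarrow> length cs = Suc n"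
  using graded unfolding graded_rank_def by blast

lemma mset_labels_maxchain: "maxchain cs \<Longrightarrow> mset (labels lam cs) = mset [1..<Suc n]"
  using Sn_EL by (simp add: Sn_EL_labeling_def)

text \<open>All chains from \<^term>\<open>bot\<close> to \<open>y\<close> carry the same labels
  (\<open>label_set_sat_chain_bot\<close>), so the choice below is immaterial.\<close>

definition label_set :: "'a \<Rightarrow> nat set" where
  "label_set y = set (labels lam (SOME cs. sat_chain bot y cs))"

lemma finite_label_set [simp]: "finite (label_set y)"
  by (simp add: label_set_def)

lemma label_set_sat_chain_bot:
  assumes cs: "sat_chain bot y cs"
  shows "set (labels lam cs) = label_set y" and "distinct (labels lam cs)"
proof -
  have mset_split: "mset (labels lam bs) + mset (labels lam ds) = mset [1..<Suc n]"
    if "sat_chain bot y bs" "sat_chain y top ds" for bs ds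
    using sat_chain_append[OF that, of lam] mset_labels_maxchain[of "bs @ tl ds"]
    by (simp add: maxchain_def)
  obtain ds where ds: "sat_chain y top ds"
    using ex_sorted_sat_chain[of y top] by auto
  have "sat_chain bot y (SOME cs. sat_chain bot y cs)"
    using cs by (rule someI)
  from mset_split[OF cs ds] mset_split[OF this ds]
  have "mset (labels lam cs) = mset (labels lam (SOME cs. sat_chain bot y cs))"
    by (metis add_right_cancel)
  then show "set (labels lam cs) = label_set y"
    unfolding label_set_def by (metis set_mset_mset)
  have "mset (labels lam cs @ labels lam ds) = mset [1..<Suc n]"
    using mset_split[OF cs ds] by simp
  then have "distinct (labels lam cs @ labels lam ds)"
    by (simp only: mset_eq_imp_distinct_iff distinct_upt)
  then show "distinct (labels lam cs)" by simp
qed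

lemma label_set_sat_chain:
  assumes cs: "sat_chain x y cs"
  shows "label_set y = label_set x \<union> set (labels lam cs)"
    and "label_set x \<inter> set (labels lam cs) = {}"
    and "card (label_set y) = card (label_set x) + length (labels lam cs)"
proof -
  obtain bs where bs: "sat_chain bot x bs"
    using ex_sorted_sat_chain[of bot x] by auto
  note bs_cs = sat_chain_append[OF bs cs, of lam]
  have distinct: "distinct (labels lam bs @ labels lam cs)"
    using label_set_sat_chain_bot(2)[of y "bs @ tl cs"] bs_cs by simp
  show union: "label_set y = label_set x \<union> set (labels lam cs)"
    using label_set_sat_chain_bot(1)[of y "bs @ tl cs"] label_set_sat_chain_bot(1)[OF bs] bs_cs
    by simp
  show "label_set x \<inter> set (labels lam cs) = {}"
    using distinct label_set_sat_chain_bot(1)[OF bs] by auto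
  then show "card (label_set y) = card (label_set x) + length (labels lam cs)"
    using distinct union by (simp add: card_Un_disjoint distinct_card)
qed

lemma label_set_mono: "x \<le> y \<Longrightarrow> label_set x \<subseteq> label_set y"
  using ex_sorted_sat_chain[of x y] label_set_sat_chain(1) by blast

lemma label_set_bot [simp]: "label_set bot = {}"
  using label_set_sat_chain_bot(1)[of bot "[bot]"] by simp

lemma label_set_top: "label_set top = {1..n}"
proof -
  obtain cs :: "'a list" where "sat_chain bot top cs"
    using ex_sorted_sat_chain[of bot top] by auto
  then show ?thesis
    using label_set_sat_chain_bot(1)[of top cs] mset_labels_maxchain[of cs]
    by (metis maxchain_def atLeastLessThanSuc_atLeastAtMost set_mset_mset set_upt)
qed

lemma label_set_subset: "label_set y \<subseteq> {1..n}"
  using label_set_mono[of y top] label_set_top by simp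

lemma card_label_set_strict_mono:
  assumes "x < y"
  shows "card (label_set x) < card (label_set y)"
proof -
  obtain cs where cs: "sat_chain x y cs"
    using ex_sorted_sat_chain[of x y] assms less_imp_le by blast
  have "length cs \<ge> 2"
  proof (cases cs)
    case (Cons a as)
    with cs assms show ?thesis by (cases as) auto
  qed (use cs in simp)
  then show ?thesis
    using label_set_sat_chain(3)[OF cs] by simp
qed

lemma eq_if_label_set_subset:
  assumes "x \<le> y" and "label_set y \<subseteq> label_set x"
  shows "x = y"
proof (rule ccontr)
  assume "x \<noteq> y"
  with assms(1) have "card (label_set x) < card (label_set y)"
    by (simp add: card_label_set_strict_mono)
  with card_mono[OF finite_label_set assms(2)] show False by simp
qed

lemma label_set_covers:
  assumes "covers y z"
  shows "label_set z = insert (lam y z) (label_set y)" and "lam y z \<notin> label_set y"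
  using label_set_sat_chain(1,2)[of y z "[y, z]"] assms by (auto simp: sat_chain_Cons_Cons)

lemma card_label_set_covers: "covers y z \<Longrightarrow> card (label_set z) = Suc (card (label_set y))"
  using label_set_covers by simp

lemma covers_if_card_label_set:
  assumes "y < z" and "card (label_set z) = Suc (card (label_set y))"
  shows "covers y z"
  unfolding covers_def
proof (intro conjI notI)
  assume "\<exists>w. y < w \<and> w < z"
  then obtain w where "y < w" "w < z" by blast
  then show False
    using card_label_set_strict_mono[of y w] card_label_set_strict_mono[of w z] assms(2) by simp
qed (rule assms(1))

lemma first_cover_with_min_label:
  assumes "x \<le> y" and "l \<in> label_set y - label_set x"
    and "\<forall>l' \<in> label_set y - label_set x. l \<le> l'"
  shows "\<exists>z. covers x z \<and> z \<le> y \<and> lam x z = l"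
proof -
  obtain cs where cs: "sat_chain x y cs" "sorted (labels lam cs)"
    using ex_sorted_sat_chain[OF assms(1)] by blast
  have labels_cs: "set (labels lam cs) = label_set y - label_set x"
    using label_set_sat_chain(1,2)[OF cs(1)] by auto
  then obtain z zs where "cs = x # z # zs"
    using cs(1) assms(2) sat_chain_nth_0[OF cs(1)]
    by (cases cs rule: remdups_adj.cases) auto
  with cs have z: "covers x z" "sat_chain z y (z # zs)" "labels lam cs = lam x z # labels lam (z # zs)"
    by (auto simp: sat_chain_Cons_Cons)
  have "l \<le> lam x z"
    using assms(3) labels_cs z(3) by auto
  moreover have "lam x z \<le> l"
    using labels_cs assms(2) cs(2) z(3) by (metis set_ConsD sorted_simps(2) order.refl)
  ultimately show ?thesis
    using z sat_chain_bounds[OF z(2)] by auto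
qed

lemma last_cover_with_max_label:
  assumes "x \<le> y" and "l \<in> label_set y - label_set x"
    and "\<forall>l' \<in> label_set y - label_set x. l' \<le> l"
  shows "\<exists>z. covers z y \<and> x \<le> z \<and> lam z y = l"
proof -
  obtain cs where cs: "sat_chain x y cs" "sorted (labels lam cs)"
    using ex_sorted_sat_chain[OF assms(1)] by blast
  have labels_cs: "set (labels lam cs) = label_set y - label_set x"
    using label_set_sat_chain(1,2)[OF cs(1)] by auto
  have "labels lam cs \<noteq> []"
    using labels_cs assms(2) by auto
  then have "0 < length (labels lam cs)"
    by (metis length_greater_0_conv)
  define k where "k = length cs - 2"
  have k: "Suc k = length cs - 1" "Suc k < length cs"
    using \<open>0 < length (labels lam cs)\<close> by (auto simp: k_def)
  have cov: "covers (cs ! k) y"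
    using cs(1) k sat_chain_nth_last[OF cs(1)] unfolding sat_chain_def by metis
  have lab_k: "labels lam cs ! k = lam (cs ! k) y"
    using k sat_chain_nth_last[OF cs(1)] by (simp add: labels_def)
  then have "lam (cs ! k) y \<le> l"
    using labels_cs k assms(3) by (metis length_labels lessI nth_mem)
  moreover have "l \<le> lam (cs ! k) y"
  proof -
    obtain p where "p < length (labels lam cs)" "labels lam cs ! p = l"
      using labels_cs assms(2) by (metis in_set_conv_nth)
    then show ?thesis
      using sorted_nth_mono[OF cs(2), of p k] lab_k k by simp
  qed
  moreover have "x \<le> cs ! k"
    using sat_chain_bounds[OF cs(1), of "cs ! k"] k by simp
  ultimately show ?thesis
    using cov by (intro exI[of _ "cs ! k"]) simp
qed

section \<open>The chain with labels \<open>1, \<dots>, n\<close>\<close>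

lemma m0_maxchain: "maxchain (m0 n lam)" and labels_m0: "labels lam (m0 n lam) = [1..<Suc n]"
proof -
  obtain cs :: "'a list" where cs: "sat_chain bot top cs" "sorted (labels lam cs)"
    using ex_sorted_sat_chain[of bot top] by auto
  have maxchain: "maxchain cs"
    using cs by (simp add: maxchain_def)
  have "labels lam cs = sort [1..<Suc n]"
    using properties_for_sort[OF mset_labels_maxchain[OF maxchain] cs(2)] by simp
  then have labels_cs: "labels lam cs = [1..<Suc n]"
    by (simp add: sorted_sort_id del: upt_Suc)
  have "m0 n lam = cs"
    unfolding m0_def
  proof (rule the_equality)
    fix ds :: "'a list"
    assume "maxchain ds \<and> labels lam ds = [1..<Suc n]"
    then show "ds = cs"
      using sorted_sat_chain_unique[of bot top ds cs] cs labels_cs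
      by (simp add: maxchain_def del: upt_Suc)
  qed (use maxchain labels_cs in simp)
  with maxchain labels_cs show "maxchain (m0 n lam)" "labels lam (m0 n lam) = [1..<Suc n]"
    by simp_all
qed

definition m0_at :: "nat \<Rightarrow> 'a" where
  "m0_at k = m0 n lam ! k"

lemma sat_chain_m0: "sat_chain bot top (m0 n lam)" and length_m0: "length (m0 n lam) = Suc n"
  using m0_maxchain maxchain_length[of "m0 n lam"] by (simp_all add: maxchain_def)

lemma m0_at_in_m0: "k \<le> n \<Longrightarrow> m0_at k \<in> set (m0 n lam)"
  using length_m0 by (simp add: m0_at_def)

lemma m0_at_0 [simp]: "m0_at 0 = bot"
  using sat_chain_nth_0[OF sat_chain_m0] by (simp add: m0_at_def)

lemma m0_at_covers:
  assumes "k < n"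
  shows "covers (m0_at k) (m0_at (Suc k))" and "lam (m0_at k) (m0_at (Suc k)) = Suc k"
proof -
  show "covers (m0_at k) (m0_at (Suc k))"
    using sat_chain_m0 length_m0 assms unfolding sat_chain_def m0_at_def by simp
  have "labels lam (m0 n lam) ! k = lam (m0_at k) (m0_at (Suc k))"
    using length_m0 assms by (simp add: labels_def m0_at_def)
  then show "lam (m0_at k) (m0_at (Suc k)) = Suc k"
    using labels_m0 assms by (simp add: nth_upt del: upt_Suc)
qed

lemma label_set_m0_at: "k \<le> n \<Longrightarrow> label_set (m0_at k) = {1..k}"
proof (induction k)
  case (Suc k)
  then show ?case
    using label_set_covers(1)[OF m0_at_covers(1)] m0_at_covers(2) by auto
qed simp

lemma m0_at_mono: "j \<le> k \<Longrightarrow> k \<le> n \<Longrightarrow> m0_at j \<le> m0_at k"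
  using sat_chain_nth_mono[OF sat_chain_m0] length_m0 by (simp add: m0_at_def)

text \<open>All labels above \<open>z\<close> exceed \<open>Suc k\<close>, so \<open>m0_at k\<close> followed by the increasing
  chain from \<open>z\<close> to \<^term>\<open>top\<close> is increasing; by uniqueness it is the tail of \<open>m0\<close>.\<close>

lemma covers_m0_at_label_unique:
  assumes "k < n" and "covers (m0_at k) z" and "lam (m0_at k) z = Suc k"
  shows "z = m0_at (Suc k)"
proof -
  define ds where "ds = drop k (m0 n lam)"
  have ds: "sat_chain (m0_at k) top ds" "labels lam ds = [Suc k..<Suc n]"
    using sat_chain_drop[OF sat_chain_m0, of k lam] labels_m0 length_m0 assms(1)
    by (auto simp: ds_def m0_at_def)
  obtain es where es: "sat_chain z top es" "sorted (labels lam es)"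
    using ex_sorted_sat_chain[of z top] by auto
  then obtain es' where es': "es = z # es'"
    by (cases es) (auto simp: sat_chain_def)
  have sat_chain_z: "sat_chain (m0_at k) top (m0_at k # es)"
    using es es' assms(2) by (simp add: sat_chain_Cons_Cons)
  have label_set_z: "label_set z = {1..Suc k}"
    using label_set_covers(1)[OF assms(2)] assms label_set_m0_at[of k] by auto
  have "Suc k \<le> l" if "l \<in> set (labels lam es)" for l
  proof -
    have "l \<in> {1..n}" "l \<notin> {1..Suc k}"
      using that label_set_sat_chain(1,2)[OF es(1)] label_set_z label_set_top by auto
    then show ?thesis by simp
  qed
  then have "sorted (labels lam (m0_at k # es))"
    using es(2) es' assms(3) by simp
  then have "ds = m0_at k # es"
    using sorted_sat_chain_unique[OF ds(1) _ sat_chain_z] ds(2) by (simp del: upt_Suc)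
  then have "ds ! 1 = z"
    using es' by simp
  then show ?thesis
    using assms(1) length_m0 by (simp add: ds_def m0_at_def)
qed

lemma m0_at_le_iff: "k \<le> n \<Longrightarrow> m0_at k \<le> y \<longleftrightarrow> {1..k} \<subseteq> label_set y"
proof (induction k)
  case (Suc k)
  show ?case
  proof
    assume "m0_at (Suc k) \<le> y"
    then show "{1..Suc k} \<subseteq> label_set y"
      using Suc.prems label_set_mono label_set_m0_at by blast
  next
    assume labels_y: "{1..Suc k} \<subseteq> label_set y"
    then have le: "m0_at k \<le> y"
      using Suc by auto
    have "Suc k \<in> label_set y - label_set (m0_at k)"
      and "\<forall>l \<in> label_set y - label_set (m0_at k). Suc k \<le> l"
      using label_set_m0_at[of k] Suc.prems labels_y label_set_subset by force+
    then obtain z where "covers (m0_at k) z" "z \<le> y" "lam (m0_at k) z = Suc k"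
      using first_cover_with_min_label[OF le] by blast
    then show "m0_at (Suc k) \<le> y"
      using covers_m0_at_label_unique Suc.prems by auto
  qed
qed simp

lemma label_set_sup_m0_at: "k \<le> n \<Longrightarrow> label_set (sup y (m0_at k)) = label_set y \<union> {1..k}"
proof (induction k)
  case (Suc k)
  define u where "u = sup y (m0_at k)"
  have label_set_u: "label_set u = label_set y \<union> {1..k}"
    using Suc by (simp add: u_def)
  have "m0_at k \<le> m0_at (Suc k)"
    using m0_at_mono Suc.prems by simp
  then have sup_eq: "sup y (m0_at (Suc k)) = sup u (m0_at (Suc k))"
    by (simp add: u_def sup_assoc sup_absorb2)
  show ?case
  proof (cases "Suc k \<in> label_set u")
    case True
    then have "m0_at (Suc k) \<le> u"
      using label_set_u m0_at_le_iff Suc.prems by (auto simp: atLeastAtMostSuc_conv)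
    then show ?thesis
      using sup_eq True label_set_u by (auto simp: sup_absorb1 atLeastAtMostSuc_conv)
  next
    case False
    have "Suc k \<in> label_set top - label_set u"
      and "\<forall>l \<in> label_set top - label_set u. Suc k \<le> l"
      using False label_set_u label_set_top Suc.prems by force+
    then obtain z where z: "covers u z" "lam u z = Suc k"
      using first_cover_with_min_label[OF top_greatest] by blast
    have label_set_z: "label_set z = label_set y \<union> {1..Suc k}"
      using label_set_covers(1)[OF z(1)] z(2) label_set_u by auto
    then have "m0_at (Suc k) \<le> z"
      using m0_at_le_iff Suc.prems by blast
    then have "sup y (m0_at (Suc k)) \<le> z"
      using covers_imp_le[OF z(1)] sup_eq by simp
    then have "label_set (sup y (m0_at (Suc k))) \<subseteq> label_set y \<union> {1..Suc k}"
      using label_set_mono label_set_z by blast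
    moreover have "label_set y \<union> {1..Suc k} \<subseteq> label_set (sup y (m0_at (Suc k)))"
      using label_set_mono[of y "sup y (m0_at (Suc k))"]
        label_set_mono[of "m0_at (Suc k)" "sup y (m0_at (Suc k))"]
        label_set_m0_at[OF Suc.prems]
      by auto
    ultimately show ?thesis by blast
  qed
qed simp

lemma le_m0_at_iff:
  assumes "k \<le> n"
  shows "y \<le> m0_at k \<longleftrightarrow> label_set y \<subseteq> {1..k}"
proof
  assume "y \<le> m0_at k"
  then show "label_set y \<subseteq> {1..k}"
    using label_set_mono[of y "m0_at k"] label_set_m0_at[OF assms] by simp
next
  assume "label_set y \<subseteq> {1..k}"
  then have "m0_at k = sup y (m0_at k)"
    using eq_if_label_set_subset[of "m0_at k" "sup y (m0_at k)"] assms
    by (simp add: label_set_sup_m0_at label_set_m0_at)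
  then show "y \<le> m0_at k"
    by (metis sup.cobounded1)
qed

text \<open>Induction on the rank of \<open>z\<close>, peeling off the cover below \<open>z\<close> that carries
  the largest label.\<close>

lemma label_set_inf_m0_at:
  assumes "k \<le> n"
  shows "label_set (inf z (m0_at k)) = label_set z \<inter> {1..k}"
proof
  show "label_set (inf z (m0_at k)) \<subseteq> label_set z \<inter> {1..k}"
    using label_set_mono[of "inf z (m0_at k)" z] label_set_mono[of "inf z (m0_at k)" "m0_at k"]
      label_set_m0_at assms
    by auto
  show "label_set z \<inter> {1..k} \<subseteq> label_set (inf z (m0_at k))"
  proof (induction "card (label_set z)" arbitrary: z)
    case (Suc r)
    define l where "l = Max (label_set z)"
    have "label_set z \<noteq> {}"
      using Suc.hyps(2) by auto
    then have l: "l \<in> label_set z" "\<forall>l' \<in> label_set z. l' \<le> l"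
      by (auto simp: l_def)
    then obtain z' where z': "covers z' z" "lam z' z = l"
      using last_cover_with_max_label[of bot z l] by auto
    have IH: "label_set z' \<inter> {1..k} \<subseteq> label_set (inf z' (m0_at k))"
      using Suc.hyps(1)[of z'] Suc.hyps(2) card_label_set_covers[OF z'(1)] by simp
    have label_set_z: "label_set z = insert l (label_set z')"
      using label_set_covers(1)[OF z'(1)] z'(2) by simp
    show ?case
    proof (cases "l \<le> k")
      case True
      have "label_set z \<subseteq> {1..k}"
        using l(2) True label_set_subset[of z] by (auto simp: subset_iff)
      then have "z \<le> m0_at k"
        using le_m0_at_iff[OF assms] by blast
      then show ?thesis
        by (simp add: inf_absorb1)
    next
      case False
      have "label_set z \<inter> {1..k} = label_set z' \<inter> {1..k}"
        using label_set_z False by auto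
      also have "\<dots> \<subseteq> label_set (inf z' (m0_at k))"
        by (rule IH)
      also have "\<dots> \<subseteq> label_set (inf z (m0_at k))"
        using covers_imp_le[OF z'(1)] by (intro label_set_mono inf_mono) simp_all
      finally show ?thesis .
    qed
  qed simp
qed

section \<open>Order ideals of the label order of a maximal chain\<close>

lemma maxchain_nth:
  assumes "maxchain (d::'a list)"
  shows "length d = Suc n" and "d ! 0 = bot" and "d ! n = top"
  using assms maxchain_length[OF assms] sat_chain_nth_0[of bot top d] sat_chain_nth_last[of bot top d]
  by (auto simp: maxchain_def)

lemma maxchain_covers: "maxchain (d::'a list) \<Longrightarrow> j < n \<Longrightarrow> covers (d ! j) (d ! Suc j)"
  using maxchain_nth(1)[of d] unfolding maxchain_def sat_chain_def by simp

lemma maxchain_labels_nth: "maxchain (d::'a list) \<Longrightarrow> j < n \<Longrightarrow> labels lam d ! j = lam (d ! j) (d ! Suc j)"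
  using maxchain_nth(1)[of d] by (simp add: labels_def)

lemma maxchain_nth_mono: "maxchain (d::'a list) \<Longrightarrow> j \<le> k \<Longrightarrow> k \<le> n \<Longrightarrow> d ! j \<le> d ! k"
  using maxchain_nth(1)[of d] sat_chain_nth_mono[of bot top d j k] by (simp add: maxchain_def)

lemma label_set_maxchain_Suc:
  assumes "maxchain (d::'a list)" and "j < n"
  shows "label_set (d ! Suc j) = insert (labels lam d ! j) (label_set (d ! j))"
    and "labels lam d ! j \<notin> label_set (d ! j)"
  using label_set_covers[OF maxchain_covers[OF assms]] maxchain_labels_nth[OF assms] by auto

lemma card_label_set_maxchain: "maxchain (d::'a list) \<Longrightarrow> j \<le> n \<Longrightarrow> card (label_set (d ! j)) = j"
  by (induction j) (simp_all add: maxchain_nth label_set_maxchain_Suc)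

lemma label_set_maxchain_top: "maxchain (d::'a list) \<Longrightarrow> label_set (d ! n) = {1..n}"
  using maxchain_nth(3) label_set_top by simp

lemma label_set_maxchain_conv:
  "maxchain (d::'a list) \<Longrightarrow> j \<le> n \<Longrightarrow> label_set (d ! j) = {labels lam d ! p | p. p < j}"
proof (induction j)
  case 0
  then show ?case by (simp add: maxchain_nth)
next
  case (Suc j)
  then show ?case
    using label_set_maxchain_Suc[of d j] by (auto simp: less_Suc_eq)
qed

definition entry_rank :: "'a list \<Rightarrow> nat \<Rightarrow> nat" where
  "entry_rank d b = (LEAST j. b \<in> label_set (d ! j))"

lemma entry_rank:
  assumes "maxchain (d::'a list)" and "b \<in> {1..n}"
  shows "b \<in> label_set (d ! entry_rank d b)" and "0 < entry_rank d b" and "entry_rank d b \<le> n"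
    and "b \<notin> label_set (d ! (entry_rank d b - 1))"
proof -
  have b_top: "b \<in> label_set (d ! n)"
    using label_set_maxchain_top[OF assms(1)] assms(2) by simp
  show b_entry: "b \<in> label_set (d ! entry_rank d b)"
    unfolding entry_rank_def using b_top by (rule LeastI)
  show "entry_rank d b \<le> n"
    unfolding entry_rank_def using b_top by (rule Least_le)
  show pos: "0 < entry_rank d b"
    using b_entry maxchain_nth(2)[OF assms(1)] by (cases "entry_rank d b") auto
  show "b \<notin> label_set (d ! (entry_rank d b - 1))"
    unfolding entry_rank_def by (rule not_less_Least) (use pos in \<open>simp add: entry_rank_def\<close>)
qed

lemma mem_label_set_maxchain_iff:
  assumes "maxchain (d::'a list)" and "b \<in> {1..n}" and "j \<le> n"
  shows "b \<in> label_set (d ! j) \<longleftrightarrow> entry_rank d b \<le> j"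
proof
  assume "b \<in> label_set (d ! j)"
  then show "entry_rank d b \<le> j"
    unfolding entry_rank_def by (rule Least_le)
next
  assume "entry_rank d b \<le> j"
  then show "b \<in> label_set (d ! j)"
    using label_set_mono[OF maxchain_nth_mono[OF assms(1)]] entry_rank(1)[OF assms(1,2)] assms(3)
    by blast
qed

lemma entry_rank_inj:
  assumes "maxchain (d::'a list)" and "a \<in> {1..n}" and "b \<in> {1..n}"
    and "entry_rank d a = entry_rank d b"
  shows "a = b"
proof -
  define p where "p = entry_rank d a"
  have p: "0 < p" "p \<le> n"
    using entry_rank[OF assms(1,2)] by (auto simp: p_def)
  have "label_set (d ! p) = insert (labels lam d ! (p - 1)) (label_set (d ! (p - 1)))"
    using label_set_maxchain_Suc(1)[OF assms(1), of "p - 1"] p by simp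
  then show ?thesis
    using entry_rank[OF assms(1,2)] entry_rank[OF assms(1,3)] assms(4) by (auto simp: p_def)
qed

definition precedes :: "'a list \<Rightarrow> nat \<Rightarrow> nat \<Rightarrow> bool" where
  "precedes d a b \<longleftrightarrow> (\<exists>j\<le>n. a \<in> label_set (d ! j) \<and> b \<notin> label_set (d ! j))"

lemma precedes_imp_label: "precedes d a b \<Longrightarrow> a \<in> {1..n}"
  unfolding precedes_def using label_set_subset by blast

lemma precedes_iff_entry_rank_less:
  assumes "maxchain (d::'a list)" and "a \<in> {1..n}" and "b \<in> {1..n}"
  shows "precedes d a b \<longleftrightarrow> entry_rank d a < entry_rank d b"
proof
  assume "precedes d a b"
  then obtain j where "j \<le> n" "a \<in> label_set (d ! j)" "b \<notin> label_set (d ! j)"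
    by (auto simp: precedes_def)
  then show "entry_rank d a < entry_rank d b"
    using mem_label_set_maxchain_iff[OF assms(1,2)] mem_label_set_maxchain_iff[OF assms(1,3)] by auto
next
  assume "entry_rank d a < entry_rank d b"
  then show "precedes d a b"
    unfolding precedes_def using entry_rank[OF assms(1,2)] mem_label_set_maxchain_iff[OF assms(1,3)]
    by (intro exI[of _ "entry_rank d a"]) auto
qed

text \<open>Order ideals of the poset on \<open>{1..n}\<close> in which \<open>a\<close> lies below \<open>b\<close> iff \<open>a < b\<close> and
  \<open>a\<close> occurs before \<open>b\<close> among the labels of \<open>d\<close>.\<close>

definition ideal :: "'a list \<Rightarrow> nat set \<Rightarrow> bool" where
  "ideal d I \<longleftrightarrow> I \<subseteq> {1..n} \<and> (\<forall>b\<in>I. \<forall>a. a < b \<longrightarrow> precedes d a b \<longrightarrow> a \<in> I)"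

lemma ideal_finite: "ideal d I \<Longrightarrow> finite I"
  by (auto simp: ideal_def intro: finite_subset)

lemma ideal_Un: "ideal d I \<Longrightarrow> ideal d J \<Longrightarrow> ideal d (I \<union> J)"
  and ideal_Int: "ideal d I \<Longrightarrow> ideal d J \<Longrightarrow> ideal d (I \<inter> J)"
  by (auto simp: ideal_def)

lemma ideal_atLeastAtMost: "k \<le> n \<Longrightarrow> ideal d {1..k}"
  unfolding ideal_def using precedes_imp_label by fastforce

lemma ideal_label_set_maxchain:
  assumes d: "maxchain (d::'a list)" and j: "j \<le> n"
  shows "ideal d (label_set (d ! j))"
  unfolding ideal_def
proof (intro conjI ballI allI impI)
  show "label_set (d ! j) \<subseteq> {1..n}"
    by (rule label_set_subset)
  fix a b
  assume b: "b \<in> label_set (d ! j)" and "precedes d a b"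
  moreover have "a \<in> {1..n}" "b \<in> {1..n}"
    using precedes_imp_label[OF \<open>precedes d a b\<close>] b label_set_subset by blast+
  ultimately show "a \<in> label_set (d ! j)"
    using precedes_iff_entry_rank_less[OF d] mem_label_set_maxchain_iff[OF d _ j] by auto
qed

section \<open>\<open>L\<^sub>c\<close> as a lattice of ideals\<close>

definition entry_meet :: "'a list \<Rightarrow> nat \<Rightarrow> 'a" where
  "entry_meet d b = inf (d ! entry_rank d b) (m0_at b)"

definition ideal_join :: "'a list \<Rightarrow> nat set \<Rightarrow> 'a" where
  "ideal_join d I = foldr sup (map (entry_meet d) (sorted_list_of_set I)) bot"

lemma ideal_join_le_iff: "finite I \<Longrightarrow> ideal_join d I \<le> z \<longleftrightarrow> (\<forall>b\<in>I. entry_meet d b \<le> z)"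
  by (simp add: ideal_join_def foldr_sup_le_iff)

lemma entry_meet_le_ideal_join: "finite I \<Longrightarrow> b \<in> I \<Longrightarrow> entry_meet d b \<le> ideal_join d I"
  using ideal_join_le_iff by blast

lemma ideal_join_mono: "finite J \<Longrightarrow> I \<subseteq> J \<Longrightarrow> ideal_join d I \<le> ideal_join d J"
  using ideal_join_le_iff[of I d "ideal_join d J"] entry_meet_le_ideal_join[of J _ d]
    finite_subset
  by blast

lemma sup_ideal_join:
  assumes "finite I" and "finite J"
  shows "sup (ideal_join d I) (ideal_join d J) = ideal_join d (I \<union> J)"
proof (rule antisym)
  show "sup (ideal_join d I) (ideal_join d J) \<le> ideal_join d (I \<union> J)"
    using ideal_join_mono assms by simp
  show "ideal_join d (I \<union> J) \<le> sup (ideal_join d I) (ideal_join d J)"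
    using ideal_join_le_iff[of "I \<union> J" d] entry_meet_le_ideal_join[of I _ d]
      entry_meet_le_ideal_join[of J _ d] assms
    by (auto intro: le_supI1 le_supI2)
qed

lemma mem_label_set_entry_meet:
  assumes "maxchain (d::'a list)" and "b \<in> {1..n}"
  shows "b \<in> label_set (entry_meet d b)"
  using label_set_inf_m0_at[of b "d ! entry_rank d b"] entry_rank(1)[OF assms] assms(2)
  by (simp add: entry_meet_def)

text \<open>The right-hand side avoids the label \<open>b\<close>; so by this lemma the join of an ideal
  avoids every label outside it.\<close>

lemma entry_meet_le_sup_before_entry:
  assumes d: "maxchain (d::'a list)" and I: "ideal d I" and a: "a \<in> I"
    and b: "b \<in> {1..n}" "b \<notin> I"
  shows "entry_meet d a \<le> sup (d ! (entry_rank d b - 1)) (m0_at (b - 1))"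
proof -
  have a_range: "a \<in> {1..n}"
    using I a by (auto simp: ideal_def)
  have "entry_rank d a \<noteq> entry_rank d b"
    using entry_rank_inj[OF d a_range b(1)] a b(2) by auto
  then consider "entry_rank d a < entry_rank d b" | "precedes d b a"
    using precedes_iff_entry_rank_less[OF d b(1) a_range] by fastforce
  then show ?thesis
  proof cases
    case 1
    then have "d ! entry_rank d a \<le> d ! (entry_rank d b - 1)"
      using maxchain_nth_mono[OF d] entry_rank[OF d b(1)] by simp
    then show ?thesis
      by (auto simp: entry_meet_def intro: le_supI1 le_infI1)
  next
    case 2
    then have "\<not> b < a"
      using I a b(2) unfolding ideal_def by blast
    moreover have "a \<noteq> b"
      using a b(2) by blast
    ultimately have "m0_at a \<le> m0_at (b - 1)"
      using m0_at_mono[of a "b - 1"] b(1) by auto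
    then show ?thesis
      by (auto simp: entry_meet_def intro: le_supI2 le_infI2)
  qed
qed

lemma label_set_ideal_join:
  assumes d: "maxchain (d::'a list)" and I: "ideal d I"
  shows "label_set (ideal_join d I) = I"
proof
  have fin: "finite I"
    using ideal_finite[OF I] .
  show "I \<subseteq> label_set (ideal_join d I)"
  proof
    fix b
    assume b: "b \<in> I"
    then have "b \<in> {1..n}"
      using I by (auto simp: ideal_def)
    then show "b \<in> label_set (ideal_join d I)"
      using mem_label_set_entry_meet[OF d] label_set_mono[OF entry_meet_le_ideal_join[OF fin b]]
      by blast
  qed
  show "label_set (ideal_join d I) \<subseteq> I"
  proof
    fix b
    assume b_join: "b \<in> label_set (ideal_join d I)"
    then have b: "b \<in> {1..n}"
      using label_set_subset by blast
    define h where "h = sup (d ! (entry_rank d b - 1)) (m0_at (b - 1))"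
    have b_h: "b \<notin> label_set h"
      using label_set_sup_m0_at[of "b - 1" "d ! (entry_rank d b - 1)"] entry_rank(4)[OF d b] b
      by (auto simp: h_def)
    show "b \<in> I"
    proof (rule ccontr)
      assume "b \<notin> I"
      then have "ideal_join d I \<le> h"
        using ideal_join_le_iff[OF fin] entry_meet_le_sup_before_entry[OF d I _ b]
        by (simp add: h_def)
      then show False
        using label_set_mono b_join b_h by blast
    qed
  qed
qed

lemma inf_ideal_join:
  assumes d: "maxchain (d::'a list)" and I: "ideal d I" and J: "ideal d J"
  shows "inf (ideal_join d I) (ideal_join d J) = ideal_join d (I \<inter> J)"
proof -
  have le: "ideal_join d (I \<inter> J) \<le> inf (ideal_join d I) (ideal_join d J)"
    using ideal_join_mono ideal_finite[OF I] ideal_finite[OF J] by simp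
  have "label_set (inf (ideal_join d I) (ideal_join d J))
      \<subseteq> label_set (ideal_join d I) \<inter> label_set (ideal_join d J)"
    using label_set_mono[OF inf_le1] label_set_mono[OF inf_le2] by blast
  also have "\<dots> = label_set (ideal_join d (I \<inter> J))"
    using label_set_ideal_join[OF d] I J ideal_Int[OF I J] by simp
  finally show ?thesis
    using eq_if_label_set_subset[OF le] by simp
qed

lemma maxchain_nth_eq_ideal_join:
  assumes d: "maxchain (d::'a list)" and j: "j \<le> n"
  shows "d ! j = ideal_join d (label_set (d ! j))"
proof -
  have "entry_meet d b \<le> d ! j" if b: "b \<in> label_set (d ! j)" for b
  proof -
    have "entry_rank d b \<le> j"
      using mem_label_set_maxchain_iff[OF d _ j] b label_set_subset by blast
    then show ?thesis
      using maxchain_nth_mono[OF d _ j] by (auto simp: entry_meet_def intro: le_infI1)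
  qed
  then have "ideal_join d (label_set (d ! j)) \<le> d ! j"
    using ideal_join_le_iff by simp
  then show ?thesis
    using eq_if_label_set_subset label_set_ideal_join[OF d ideal_label_set_maxchain[OF d j]]
    by (metis order_refl)
qed

lemma m0_at_eq_ideal_join:
  assumes d: "maxchain (d::'a list)" and k: "k \<le> n"
  shows "m0_at k = ideal_join d {1..k}"
proof -
  have "entry_meet d b \<le> m0_at k" if "b \<in> {1..k}" for b
    using that m0_at_mono[of b k] k by (auto simp: entry_meet_def intro: le_infI2)
  then have "ideal_join d {1..k} \<le> m0_at k"
    using ideal_join_le_iff by simp
  then show ?thesis
    using eq_if_label_set_subset label_set_ideal_join[OF d ideal_atLeastAtMost[OF k]]
      label_set_m0_at[OF k]
    by (metis order_refl)
qed

lemma ideal_join_mem_Lsub: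
  assumes d: "maxchain (d::'a list)" and I: "I \<subseteq> {1..n}"
  shows "ideal_join d I \<in> Lsub n lam d"
  unfolding ideal_join_def Lsub_def
proof (rule foldr_sup_closed)
  show "bot \<in> gen_sublattice (set (m0 n lam) \<union> set d)"
    using m0_at_in_m0[of 0] by (auto intro: gen_sublattice.gen)
  show "set (map (entry_meet d) (sorted_list_of_set I)) \<subseteq> gen_sublattice (set (m0 n lam) \<union> set d)"
  proof
    fix x
    assume "x \<in> set (map (entry_meet d) (sorted_list_of_set I))"
    then obtain b where b: "b \<in> {1..n}" "x = entry_meet d b"
      using I finite_subset[OF I] by auto
    have "d ! entry_rank d b \<in> set d"
      using entry_rank(3)[OF d b(1)] maxchain_nth(1)[OF d] by simp
    moreover have "m0_at b \<in> set (m0 n lam)"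
      using m0_at_in_m0 b(1) by simp
    ultimately show "x \<in> gen_sublattice (set (m0 n lam) \<union> set d)"
      unfolding b(2) entry_meet_def by (auto intro: gen_sublattice.gen gen_sublattice.meet)
  qed
qed (rule gen_sublattice.join)

lemma generators_subset_ideal_joins:
  assumes d: "maxchain (d::'a list)"
  shows "set (m0 n lam) \<union> set d \<subseteq> ideal_join d ` Collect (ideal d)"
proof -
  have "m0_at k \<in> ideal_join d ` Collect (ideal d)" if "k \<le> n" for k
    using m0_at_eq_ideal_join[OF d that] ideal_atLeastAtMost[OF that] by blast
  moreover have "d ! j \<in> ideal_join d ` Collect (ideal d)" if "j \<le> n" for j
    using maxchain_nth_eq_ideal_join[OF d that] ideal_label_set_maxchain[OF d that] by blast
  ultimately show ?thesis
    using length_m0 maxchain_nth(1)[OF d]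
    by (auto simp: in_set_conv_nth m0_at_def less_Suc_eq_le)
qed

lemma Lsub_eq_ideal_joins:
  assumes d: "maxchain (d::'a list)"
  shows "Lsub n lam d = ideal_join d ` Collect (ideal d)"
proof
  show "ideal_join d ` Collect (ideal d) \<subseteq> Lsub n lam d"
    using ideal_join_mem_Lsub[OF d] by (auto simp: ideal_def)
  show "Lsub n lam d \<subseteq> ideal_join d ` Collect (ideal d)"
  proof
    fix y
    assume "y \<in> Lsub n lam d"
    then show "y \<in> ideal_join d ` Collect (ideal d)"
      unfolding Lsub_def
    proof (induction rule: gen_sublattice.induct)
      case (gen x)
      then show ?case
        using generators_subset_ideal_joins[OF d] by blast
    next
      case (meet x y)
      then show ?case
        using inf_ideal_join[OF d] ideal_Int by auto
    next
      case (join x y)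
      then show ?case
        using sup_ideal_join ideal_Un ideal_finite by auto
    qed
  qed
qed

section \<open>The operators \<open>U\<^sub>i\<close>\<close>

lemma increasing_middle_unique:
  assumes "covers x p" "covers p z" "lam x p \<le> lam p z"
    and "covers x q" "covers q z" "lam x q \<le> lam q z"
  shows "p = q"
  using sorted_sat_chain_unique[of x z "[x, p, z]" "[x, q, z]"] assms
  by (simp add: sat_chain_Cons_Cons)

lemma maxchain_list_update:
  assumes d: "maxchain (d::'a list)" and i: "0 < i" "i < n"
    and cov: "covers (d ! (i - 1)) r" "covers r (d ! Suc i)"
  shows "maxchain (d[i := r])"
proof -
  have len: "length d = Suc n"
    using maxchain_nth(1)[OF d] .
  have "d[i := r] \<noteq> []" "d[i := r] ! 0 = bot" "d[i := r] ! n = top"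
    using maxchain_nth[OF d] i by (auto simp: nth_list_update)
  moreover have "covers (d[i := r] ! j) (d[i := r] ! Suc j)" if "j < n" for j
    using maxchain_covers[OF d that] cov i len that
    by (cases "j = i - 1"; cases "j = i") (auto simp: nth_list_update)
  ultimately show ?thesis
    unfolding maxchain_def sat_chain_def using len
    by (simp add: hd_conv_nth last_conv_nth)
qed

lemma Uop_eq_list_update:
  assumes d: "maxchain (d::'a list)" and i: "0 < i" "i < n"
    and cov: "covers (d ! (i - 1)) r" "covers r (d ! Suc i)"
    and le: "lam (d ! (i - 1)) r \<le> lam r (d ! Suc i)"
  shows "Uop lam i d = d[i := r]"
proof -
  have len: "length d = Suc n"
    using maxchain_nth(1)[OF d] .
  have mc: "maxchain (d[i := r])"
    using maxchain_list_update[OF d i cov] .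
  show ?thesis
    unfolding Uop_def
  proof (rule the_equality)
    show "maxchain (d[i := r]) \<and> length (d[i := r]) = length d \<and>
        (\<forall>j<length d. j \<noteq> i \<longrightarrow> d[i := r] ! j = d ! j) \<and>
        labels lam (d[i := r]) ! (i - 1) \<le> labels lam (d[i := r]) ! i"
      using mc le maxchain_labels_nth[OF mc, of "i - 1"] maxchain_labels_nth[OF mc, of i] i len
      by simp
  next
    fix e
    assume "maxchain e \<and> length e = length d \<and> (\<forall>j<length d. j \<noteq> i \<longrightarrow> e ! j = d ! j) \<and>
        labels lam e ! (i - 1) \<le> labels lam e ! i"
    then have e: "maxchain e" "length e = length d" "\<And>j. j < length d \<Longrightarrow> j \<noteq> i \<Longrightarrow> e ! j = d ! j"
      "labels lam e ! (i - 1) \<le> labels lam e ! i"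
      by auto
    have ends: "e ! (i - 1) = d ! (i - 1)" "e ! Suc i = d ! Suc i"
      using e(3)[of "i - 1"] e(3)[of "Suc i"] i len by simp_all
    have "e ! i = r"
      using increasing_middle_unique[OF _ _ _ cov le] maxchain_covers[OF e(1), of "i - 1"]
        maxchain_covers[OF e(1), of i] e(4) maxchain_labels_nth[OF e(1), of "i - 1"]
        maxchain_labels_nth[OF e(1), of i] ends i
      by simp
    show "e = d[i := r]"
    proof (rule nth_equalityI)
      show "length e = length (d[i := r])"
        using e(2) by simp
      fix j
      assume "j < length e"
      then show "e ! j = d[i := r] ! j"
        using e(2) e(3)[of j] \<open>e ! i = r\<close> by (cases "j = i") auto
    qed
  qed
qed

lemma Uop_no_descent:
  assumes d: "maxchain (d::'a list)" and i: "0 < i" "i < n"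
    and "labels lam d ! (i - 1) \<le> labels lam d ! i"
  shows "Uop lam i d = d"
proof -
  have "covers (d ! (i - 1)) (d ! i)" "covers (d ! i) (d ! Suc i)"
    using maxchain_covers[OF d, of "i - 1"] maxchain_covers[OF d, of i] i by simp_all
  then show ?thesis
    using Uop_eq_list_update[OF d i] assms(4) maxchain_labels_nth[OF d, of "i - 1"]
      maxchain_labels_nth[OF d, of i] i
    by simp
qed

text \<open>At a descent \<open>b > a\<close>, any \<open>r\<close> between \<open>d ! (i - 1)\<close> and \<open>d ! Suc i\<close> whose label set
  gains \<open>a\<close> first yields the increasing chain through the rank two interval.\<close>

lemma Uop_descent:
  assumes d: "maxchain (d::'a list)" and i: "0 < i" "i < n"
    and descent: "labels lam d ! i < labels lam d ! (i - 1)"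
    and r: "d ! (i - 1) \<le> r" "r \<le> d ! Suc i"
      "label_set r = insert (labels lam d ! i) (label_set (d ! (i - 1)))"
  shows "Uop lam i d = d[i := r]" and "maxchain (d[i := r])"
proof -
  define a where "a = labels lam d ! i"
  define b where "b = labels lam d ! (i - 1)"
  define S where "S = label_set (d ! (i - 1))"
  have S_i: "label_set (d ! i) = insert b S" "b \<notin> S"
    using label_set_maxchain_Suc[OF d, of "i - 1"] i by (simp_all add: S_def b_def)
  have S_Suc_i: "label_set (d ! Suc i) = insert a (insert b S)" "a \<notin> insert b S"
    using label_set_maxchain_Suc[OF d, of i] i S_i by (simp_all add: a_def)
  have card1: "card (label_set r) = Suc (card (label_set (d ! (i - 1))))"
    using r(3) S_Suc_i(2) by (simp add: a_def S_def)
  then have "d ! (i - 1) \<noteq> r"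
    by auto
  then have cov1: "covers (d ! (i - 1)) r"
    using r(1) card1 by (intro covers_if_card_label_set) simp_all
  have card2: "card (label_set (d ! Suc i)) = Suc (card (label_set r))"
    using r(3) S_Suc_i S_i(2) by (simp add: a_def S_def)
  then have "r \<noteq> d ! Suc i"
    by auto
  then have cov2: "covers r (d ! Suc i)"
    using r(2) card2 by (intro covers_if_card_label_set) simp_all
  have "lam (d ! (i - 1)) r = a"
    using label_set_covers[OF cov1] r(3) S_Suc_i(2) by (auto simp: a_def S_def)
  moreover have "lam r (d ! Suc i) = b"
    using label_set_covers[OF cov2] r(3) S_Suc_i by (auto simp: a_def S_def)
  ultimately show "Uop lam i d = d[i := r]" and "maxchain (d[i := r])"
    using Uop_eq_list_update[OF d i cov1 cov2] maxchain_list_update[OF d i cov1 cov2] descent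
    by (simp_all add: a_def b_def)
qed

lemma ex_Uop_descent:
  assumes d: "maxchain (d::'a list)" and i: "0 < i" "i < n"
    and descent: "labels lam d ! i < labels lam d ! (i - 1)"
  obtains r where "Uop lam i d = d[i := r]" and "maxchain (d[i := r])"
    and "label_set r = insert (labels lam d ! i) (label_set (d ! (i - 1)))"
proof -
  define a where "a = labels lam d ! i"
  have S_Suc_i: "label_set (d ! Suc i)
      = insert a (insert (labels lam d ! (i - 1)) (label_set (d ! (i - 1))))"
    "a \<notin> insert (labels lam d ! (i - 1)) (label_set (d ! (i - 1)))"
    using label_set_maxchain_Suc[OF d, of "i - 1"] label_set_maxchain_Suc[OF d, of i] i
    by (simp_all add: a_def)
  have "d ! (i - 1) \<le> d ! Suc i"
    using maxchain_nth_mono[OF d, of "i - 1" "Suc i"] i by simp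
  moreover have "a \<in> label_set (d ! Suc i) - label_set (d ! (i - 1))"
    and "\<forall>l \<in> label_set (d ! Suc i) - label_set (d ! (i - 1)). a \<le> l"
    using S_Suc_i descent by (auto simp: a_def)
  ultimately obtain r where r: "covers (d ! (i - 1)) r" "r \<le> d ! Suc i" "lam (d ! (i - 1)) r = a"
    using first_cover_with_min_label by blast
  have "label_set r = insert a (label_set (d ! (i - 1)))"
    using label_set_covers(1)[OF r(1)] r(3) by simp
  with Uop_descent[OF d i descent covers_imp_le[OF r(1)] r(2)] show thesis
    using that by (simp add: a_def)
qed

lemma maxchain_Uop:
  assumes d: "maxchain (d::'a list)" and i: "0 < i" "i < n"
  shows "maxchain (Uop lam i d)"
proof (cases "labels lam d ! (i - 1) \<le> labels lam d ! i")
  case True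
  then show ?thesis
    using Uop_no_descent[OF d i] d by simp
next
  case False
  then show ?thesis
    using ex_Uop_descent[OF d i] by (metis not_le)
qed

lemma Mset_maxchain:
  assumes "maxchain (c::'a list)"
  shows "d \<in> Mset lam c \<Longrightarrow> maxchain d"
proof (induction rule: Mset.induct)
  case base
  show ?case by (rule assms)
next
  case (step d i)
  then show ?case
    using maxchain_Uop maxchain_nth(1) by auto
qed

lemma Mset_trans: "e \<in> Mset lam d \<Longrightarrow> d \<in> Mset lam c \<Longrightarrow> e \<in> Mset lam c"
  by (induction rule: Mset.induct) (auto intro: Mset.step)

section \<open>Elements of the chains in \<open>M\<^sub>c\<close>\<close>

lemma ideal_insert_smaller:
  assumes "ideal c (insert a (insert b I))" and "ideal c I" and "a < b"
  shows "ideal c (insert a I)"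
  unfolding ideal_def
proof (intro conjI ballI allI impI)
  show "insert a I \<subseteq> {1..n}"
    using assms(1) by (auto simp: ideal_def)
  fix x y
  assume x: "x \<in> insert a I" and "y < x" and "precedes c y x"
  then have "y \<in> insert a (insert b I)" "x \<in> I \<longrightarrow> y \<in> I"
    using assms(1,2) unfolding ideal_def by blast+
  then show "y \<in> insert a I"
    using x \<open>y < x\<close> assms(3) by auto
qed

lemma Uop_descent_ideal_join:
  assumes c: "maxchain (c::'a list)" and d: "maxchain d" and i: "0 < i" "i < n"
    and descent: "labels lam d ! i < labels lam d ! (i - 1)"
    and below: "ideal c (label_set (d ! (i - 1)))" "d ! (i - 1) = ideal_join c (label_set (d ! (i - 1)))"
    and above: "ideal c (label_set (d ! Suc i))" "d ! Suc i = ideal_join c (label_set (d ! Suc i))"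
  defines "J \<equiv> insert (labels lam d ! i) (label_set (d ! (i - 1)))"
  shows "Uop lam i d = d[i := ideal_join c J]" and "maxchain (d[i := ideal_join c J])"
    and "ideal c J" and "label_set (ideal_join c J) = J"
proof -
  have label_set_Suc_i: "label_set (d ! Suc i)
      = insert (labels lam d ! i) (insert (labels lam d ! (i - 1)) (label_set (d ! (i - 1))))"
    using label_set_maxchain_Suc(1)[OF d, of i] label_set_maxchain_Suc(1)[OF d, of "i - 1"] i
    by simp
  show J: "ideal c J"
    using ideal_insert_smaller[OF _ below(1) descent] above(1) label_set_Suc_i by (simp add: J_def)
  show label_set_J: "label_set (ideal_join c J) = J"
    using label_set_ideal_join[OF c J] .
  have "label_set (d ! (i - 1)) \<subseteq> J" and "J \<subseteq> label_set (d ! Suc i)"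
    using label_set_Suc_i by (auto simp: J_def)
  then have "d ! (i - 1) \<le> ideal_join c J" and "ideal_join c J \<le> d ! Suc i"
    using below(2) above(2) ideal_join_mono[OF ideal_finite[OF J]]
      ideal_join_mono[OF ideal_finite[OF above(1)]]
    by metis+
  then show "Uop lam i d = d[i := ideal_join c J]" and "maxchain (d[i := ideal_join c J])"
    using Uop_descent[OF d i descent] label_set_J by (simp_all add: J_def)
qed

lemma Mset_nth_eq_ideal_join:
  assumes c: "maxchain (c::'a list)"
  shows "d \<in> Mset lam c \<Longrightarrow>
    maxchain d \<and> (\<forall>j\<le>n. ideal c (label_set (d ! j)) \<and> d ! j = ideal_join c (label_set (d ! j)))"
proof (induction rule: Mset.induct)
  case base
  show ?case
    using c ideal_label_set_maxchain[OF c] maxchain_nth_eq_ideal_join[OF c] by blast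
next
  case (step d i)
  then have d: "maxchain d"
    and IH: "\<And>j. j \<le> n \<Longrightarrow> ideal c (label_set (d ! j)) \<and> d ! j = ideal_join c (label_set (d ! j))"
    by auto
  have i: "0 < i" "i < n"
    using step maxchain_nth(1)[OF d] by auto
  show ?case
  proof (cases "labels lam d ! (i - 1) \<le> labels lam d ! i")
    case True
    then show ?thesis
      using Uop_no_descent[OF d i] d IH by simp
  next
    case False
    then have descent: "labels lam d ! i < labels lam d ! (i - 1)"
      by simp
    have below: "ideal c (label_set (d ! (i - 1)))" "d ! (i - 1) = ideal_join c (label_set (d ! (i - 1)))"
      and above: "ideal c (label_set (d ! Suc i))" "d ! Suc i = ideal_join c (label_set (d ! Suc i))"
      using IH[of "i - 1"] IH[of "Suc i"] i by simp_all
    note U = Uop_descent_ideal_join[OF c d i descent below above]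
    have "ideal c (label_set (Uop lam i d ! j)) \<and> Uop lam i d ! j = ideal_join c (label_set (Uop lam i d ! j))"
      if "j \<le> n" for j
      using U IH[OF that] maxchain_nth(1)[OF d] i by (cases "j = i") simp_all
    with U(1,2) show ?thesis
      by simp
  qed
qed

lemma Qset_subset_ideal_joins:
  assumes c: "maxchain (c::'a list)"
  shows "Qset lam c \<subseteq> ideal_join c ` Collect (ideal c)"
proof
  fix y
  assume "y \<in> Qset lam c"
  then obtain d j where d: "d \<in> Mset lam c" and j: "j < length d" "y = d ! j"
    by (auto simp: Qset_def in_set_conv_nth)
  have "j \<le> n"
    using j(1) maxchain_nth(1)[OF Mset_maxchain[OF c d]] by simp
  then show "y \<in> ideal_join c ` Collect (ideal c)"
    using Mset_nth_eq_ideal_join[OF c d] j(2) by blast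
qed

lemma exists_crossing_position:
  assumes d: "maxchain (d::'a list)" and I: "I \<subseteq> {1..n}"
    and ne: "label_set (d ! card I) \<noteq> I"
  obtains i where "0 < i" "i < n" "labels lam d ! (i - 1) \<notin> I" "labels lam d ! i \<in> I"
proof -
  define k where "k = card I"
  have fin: "finite I"
    using I finite_subset by blast
  have k: "k \<le> n"
    using card_mono[OF _ I] by (simp add: k_def)
  have card_k: "card (label_set (d ! k)) = k"
    using card_label_set_maxchain[OF d k] .
  have "\<not> label_set (d ! k) \<subseteq> I" and "\<not> I \<subseteq> label_set (d ! k)"
    using card_subset_eq[OF fin] card_subset_eq[OF finite_label_set] card_k ne by (metis k_def)+
  then obtain p a where p: "p < k" "labels lam d ! p \<notin> I"
    and a: "a \<in> I" "a \<notin> label_set (d ! k)"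
    using label_set_maxchain_conv[OF d k] by auto
  have "a \<in> label_set (d ! n)"
    using a(1) I label_set_maxchain_top[OF d] by auto
  then obtain q where q: "q < n" "a = labels lam d ! q"
    using label_set_maxchain_conv[OF d, of n] by auto
  have "k \<le> q"
    using a(2) q(2) label_set_maxchain_conv[OF d k] by (auto simp: not_less[symmetric])
  then obtain i where "p < i" "i \<le> q" "labels lam d ! (i - 1) \<notin> I" "labels lam d ! i \<in> I"
    using exists_crossing_step[of "\<lambda>j. labels lam d ! j \<in> I" p q] p a q by auto
  moreover have "0 < i" "i < n"
    using \<open>p < i\<close> \<open>i \<le> q\<close> q(1) by simp_all
  ultimately show thesis
    using that by blast
qed

lemma precedes_list_update:
  assumes d: "maxchain (d::'a list)" and i: "0 < i" "i < n"
    and r: "label_set r = insert (labels lam d ! i) (label_set (d ! (i - 1)))"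
    and "precedes (d[i := r]) y x"
  shows "precedes d y x \<or> (y = labels lam d ! i \<and> x = labels lam d ! (i - 1))"
proof -
  define a where "a = labels lam d ! i"
  define b where "b = labels lam d ! (i - 1)"
  define S where "S = label_set (d ! (i - 1))"
  have S_Suc_i: "label_set (d ! Suc i) = insert a (insert b S)"
    using label_set_maxchain_Suc(1)[OF d, of i] label_set_maxchain_Suc(1)[OF d, of "i - 1"] i
    by (simp add: a_def b_def S_def)
  have len: "length d = Suc n"
    using maxchain_nth(1)[OF d] .
  obtain j where j: "j \<le> n" "y \<in> label_set (d[i := r] ! j)" "x \<notin> label_set (d[i := r] ! j)"
    using assms(5) by (auto simp: precedes_def)
  show ?thesis
  proof (cases "j = i")
    case False
    then show ?thesis
      using j by (auto simp: precedes_def)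
  next
    case True
    then have y: "y \<in> insert a S" and x: "x \<notin> insert a S"
      using j r len i by (simp_all add: a_def S_def)
    consider "y \<in> S" | "y = a" "x = b" | "y = a" "x \<noteq> b"
      using y by blast
    then show ?thesis
    proof cases
      case 1
      then show ?thesis
        unfolding precedes_def using x i by (intro disjI1 exI[of _ "i - 1"]) (auto simp: S_def)
    next
      case 3
      then show ?thesis
        unfolding precedes_def using x S_Suc_i i by (intro disjI1 exI[of _ "Suc i"]) auto
    qed (simp add: a_def b_def)
  qed
qed

lemma ideal_list_update:
  assumes d: "maxchain (d::'a list)" and i: "0 < i" "i < n"
    and r: "label_set r = insert (labels lam d ! i) (label_set (d ! (i - 1)))"
    and I: "ideal d I" and b: "labels lam d ! (i - 1) \<notin> I"
  shows "ideal (d[i := r]) I"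
  unfolding ideal_def
proof (intro conjI ballI allI impI)
  show "I \<subseteq> {1..n}"
    using I by (simp add: ideal_def)
  fix x y
  assume "x \<in> I" "y < x" "precedes (d[i := r]) y x"
  then have "precedes d y x"
    using precedes_list_update[OF d i r] b by auto
  then show "y \<in> I"
    using I \<open>x \<in> I\<close> \<open>y < x\<close> by (auto simp: ideal_def)
qed

text \<open>Strictly decreases whenever \<open>Uop\<close> moves a label of \<open>I\<close> in front of a label
  outside \<open>I\<close>.\<close>

definition ideal_defect :: "nat set \<Rightarrow> 'a list \<Rightarrow> nat" where
  "ideal_defect I d = (\<Sum>j\<le>n. card (label_set (d ! j) - I))"

lemma ideal_defect_list_update:
  assumes d: "maxchain (d::'a list)" and i: "0 < i" "i < n"
    and r: "label_set r = insert (labels lam d ! i) (label_set (d ! (i - 1)))"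
    and crossing: "labels lam d ! (i - 1) \<notin> I" "labels lam d ! i \<in> I"
  shows "ideal_defect I (d[i := r]) < ideal_defect I d"
  unfolding ideal_defect_def
proof (rule sum_strict_mono_ex1)
  have "label_set (d ! i) = insert (labels lam d ! (i - 1)) (label_set (d ! (i - 1)))"
    "labels lam d ! (i - 1) \<notin> label_set (d ! (i - 1))"
    using label_set_maxchain_Suc[OF d, of "i - 1"] i by simp_all
  then have less: "card (label_set (d[i := r] ! i) - I) < card (label_set (d ! i) - I)"
    using r crossing maxchain_nth(1)[OF d] i by (simp add: insert_Diff_if)
  then show "\<exists>j\<in>{..n}. card (label_set (d[i := r] ! j) - I) < card (label_set (d ! j) - I)"
    using i by (intro bexI[of _ i]) auto
  show "\<forall>j\<in>{..n}. card (label_set (d[i := r] ! j) - I) \<le> card (label_set (d ! j) - I)"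
    using less by (metis less_imp_le nth_list_update_neq order_refl)
qed simp

lemma ideal_defect_descent_step:
  assumes d: "maxchain (d::'a list)" and I: "ideal d I" and i: "0 < i" "i < n"
    and crossing: "labels lam d ! (i - 1) \<notin> I" "labels lam d ! i \<in> I"
  obtains d' where "d' \<in> Mset lam d" "maxchain d'" "ideal d' I" "ideal_defect I d' < ideal_defect I d"
proof -
  define a where "a = labels lam d ! i"
  define b where "b = labels lam d ! (i - 1)"
  have "precedes d b a"
    unfolding precedes_def using label_set_maxchain_Suc[OF d, of "i - 1"] label_set_maxchain_Suc[OF d, of i] i
    by (intro exI[of _ i]) (auto simp: a_def b_def)
  then have "\<not> b < a"
    using I crossing unfolding ideal_def a_def b_def by blast
  then have "a < b"
    using crossing by (cases "a = b") (auto simp: a_def b_def)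
  then obtain r where U: "Uop lam i d = d[i := r]" "maxchain (d[i := r])"
    and r: "label_set r = insert a (label_set (d ! (i - 1)))"
    using ex_Uop_descent[OF d i] by (auto simp: a_def b_def)
  have "Uop lam i d \<in> Mset lam d"
    using i maxchain_nth(1)[OF d] by (intro Mset.step[OF Mset.base]) auto
  show thesis
  proof (rule that)
    show "d[i := r] \<in> Mset lam d"
      using \<open>Uop lam i d \<in> Mset lam d\<close> U(1) by simp
    show "ideal (d[i := r]) I"
      using ideal_list_update[OF d i _ I crossing(1)] r by (simp add: a_def)
    show "ideal_defect I (d[i := r]) < ideal_defect I d"
      using ideal_defect_list_update[OF d i _ crossing] r by (simp add: a_def)
  qed (rule U(2))
qed

lemma exists_Mset_label_set:
  assumes "maxchain (d::'a list)" and "ideal d I"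
  shows "\<exists>d'\<in>Mset lam d. \<exists>j\<le>n. label_set (d' ! j) = I"
  using assms
proof (induction "ideal_defect I d" arbitrary: d rule: less_induct)
  case less
  show ?case
  proof (cases "label_set (d ! card I) = I")
    case True
    have "card I \<le> n"
      using less.prems card_mono[of "{1..n}" I] by (auto simp: ideal_def)
    with True show ?thesis
      using Mset.base by blast
  next
    case False
    obtain i where "0 < i" "i < n" "labels lam d ! (i - 1) \<notin> I" "labels lam d ! i \<in> I"
      using exists_crossing_position[OF less.prems(1) _ False] less.prems(2)
      by (auto simp: ideal_def)
    then obtain d' where "d' \<in> Mset lam d" "maxchain d'" "ideal d' I"
      "ideal_defect I d' < ideal_defect I d"
      using ideal_defect_descent_step[OF less.prems] by blast
    then show ?thesis
      using less.hyps Mset_trans by blast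
  qed
qed

lemma ideal_joins_subset_Qset:
  assumes c: "maxchain (c::'a list)"
  shows "ideal_join c ` Collect (ideal c) \<subseteq> Qset lam c"
proof
  fix y
  assume "y \<in> ideal_join c ` Collect (ideal c)"
  then obtain I where I: "ideal c I" "y = ideal_join c I"
    by blast
  obtain d j where d: "d \<in> Mset lam c" "j \<le> n" "label_set (d ! j) = I"
    using exists_Mset_label_set[OF c I(1)] by blast
  have "d ! j = y"
    using Mset_nth_eq_ideal_join[OF c d(1)] d I by auto
  moreover have "j < length d"
    using maxchain_nth(1)[OF Mset_maxchain[OF c d(1)]] d(2) by simp
  ultimately show "y \<in> Qset lam c"
    using d(1) unfolding Qset_def by (auto intro: nth_mem)
qed

end

theorem mainTheorem8:
  fixes lam :: "'a::{finite,bounded_lattice} \<Rightarrow> 'a \<Rightarrow> nat"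
    and n :: nat and m m' :: "'a list"
  assumes "graded_rank TYPE('a) n"
    and "Sn_EL_labeling n lam"
    and "maxchain m"
    and "m' \<in> Mset lam m"
  shows "Qset lam m' = Lsub n lam m'"
proof -
  interpret Sn_EL_lattice lam n
    using assms(1,2) by unfold_locales
  have m': "maxchain m'"
    using Mset_maxchain[OF assms(3,4)] .
  show ?thesis
    using Qset_subset_ideal_joins[OF m'] ideal_joins_subset_Qset[OF m'] Lsub_eq_ideal_joins[OF m']
    by blast
qed

end
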